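(* For any integers $n,m\geq 1$, the order of $1+q^m$ in $(q;q)_n=\prod_{i=1}^n(1-q^i)$ is $\lfloor n/2m\rfloor$; that is, $(1+q^m)^{\lfloor n/2m\rfloor}$ divides $(q;q)_n$ and $(1+q^m)^{\lfloor n/2m\rfloor+1}$ does not divide $(q;q)_n$. *)

theory Defs
  imports "HOL-Computational_Algebra.Polynomial"
begin

definition qpoch :: "nat \<Rightarrow> int poly" where
  "qpoch n = (\<Prod>i=1..n. 1 - monom 1 i)"

end

theory Submission
  imports Defs "HOL-Library.Real_Mod"
begin

text \<open>
  Since \<open>1 - q\<^sup>2\<^sup>m = (1 + q\<^sup>m)(1 - q\<^sup>m)\<close>, the factor \<open>1 + q\<^sup>m\<close> divides \<open>1 - q\<^sup>i\<close> whenever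
  \<open>2m | i\<close>, which gives the divisibility. Conversely, \<open>\<zeta> = cis (\<pi>/m)\<close> is a root of
  \<open>1 + q\<^sup>m\<close> and a primitive \<open>2m\<close>-th root of unity. Each \<open>1 - q\<^sup>i\<close> has only simple roots,
  and \<open>\<zeta>\<close> is one of them exactly when \<open>2m | i\<close>, so \<open>\<zeta>\<close> is a root of \<open>(q;q)\<^sub>n\<close> of
  multiplicity exactly \<open>\<lfloor>n/2m\<rfloor>\<close>; hence a higher power of \<open>1 + q\<^sup>m\<close> cannot divide it.
\<close>

lemma one_plus_monom_dvd_one_minus_monom:
  assumes "2 * m dvd i"
  shows "1 + monom (1::'a::comm_ring_1) m dvd 1 - monom 1 i"
proof -
  obtain k where i: "i = 2 * m * k"
    using assms by blast
  have "1 + monom (1::'a) m dvd 1 - monom 1 m ^ 2"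
    by (rule dvdI[of _ _ "1 - monom 1 m"]) (simp add: algebra_simps power2_eq_square)
  also have "\<dots> dvd 1 - (monom 1 m ^ 2) ^ k"
    by (metis dvd_triv_left one_diff_power_eq)
  also have "(monom (1::'a) m ^ 2) ^ k = monom 1 i"
    by (simp add: i monom_power power_mult mult.commute)
  finally show ?thesis .
qed

lemma power_one_plus_monom_dvd_prod_one_minus_monom:
  "(1 + monom 1 m) ^ (n div (2 * m)) dvd (\<Prod>i=1..n. 1 - monom (1::'a::comm_ring_1) i)"
proof (induction n)
  case 0
  then show ?case by simp
next
  case (Suc n)
  show ?case
  proof (cases "2 * m dvd Suc n")
    case True
    then have "Suc n div (2 * m) = Suc (n div (2 * m))"
      by (simp add: div_Suc dvd_eq_mod_eq_0)
    with mult_dvd_mono[OF Suc one_plus_monom_dvd_one_minus_monom[OF True]] show ?thesis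
      by (simp add: prod.nat_ivl_Suc' mult.commute)
  next
    case False
    then have "Suc n div (2 * m) = n div (2 * m)"
      by (simp add: div_Suc dvd_eq_mod_eq_0)
    with Suc show ?thesis
      by (simp add: prod.nat_ivl_Suc')
  qed
qed

lemma order_one_minus_monom:
  fixes a :: "'a::{idom,ring_char_0}"
  assumes "i > 0"
  shows "order a (1 - monom 1 i) = (if a ^ i = 1 then 1 else 0)"
proof (cases "a ^ i = 1")
  case True
  have nonzero: "1 - monom (1::'a) i \<noteq> 0"
    using assms by (simp add: monom_eq_1_iff)
  have root: "poly (1 - monom 1 i) a = 0"
    using True by (simp add: poly_monom)
  have "a \<noteq> 0"
    using True assms by (auto simp: power_0_left)
  then have "poly (pderiv (1 - monom 1 i)) a \<noteq> 0"
    using assms by (simp add: pderiv_diff pderiv_monom poly_monom)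
  then have "order a (pderiv (1 - monom 1 i)) = 0"
    by (rule order_0I)
  with order_pderiv[OF nonzero root] True show ?thesis
    by simp
next
  case False
  then have "poly (1 - monom 1 i) a \<noteq> 0"
    by (simp add: poly_monom)
  with False show ?thesis
    by (simp add: order_0I)
qed

lemma order_prod_one_minus_monom:
  fixes a :: "'a::{idom,ring_char_0}"
  assumes "\<And>i. a ^ i = 1 \<longleftrightarrow> k dvd i"
  shows "order a (\<Prod>i=1..n. 1 - monom 1 i) = n div k"
proof (induction n)
  case 0
  then show ?case by simp
next
  case (Suc n)
  have "(\<Prod>i=1..Suc n. 1 - monom (1::'a) i) \<noteq> 0"
    by (simp add: monom_eq_1_iff)
  then have "order a (\<Prod>i=1..Suc n. 1 - monom 1 i)
      = order a (\<Prod>i=1..n. 1 - monom 1 i) + order a (1 - monom 1 (Suc n))"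
    by (simp add: prod.nat_ivl_Suc' order_mult)
  also have "\<dots> = n div k + (if k dvd Suc n then 1 else 0)"
    using Suc.IH order_one_minus_monom[of "Suc n" a] by (simp only: assms zero_less_Suc simp_thms)
  also have "\<dots> = Suc n div k"
    by (simp add: div_Suc dvd_eq_mod_eq_0)
  finally show ?case .
qed

lemma map_poly_of_int_add:
  "map_poly (of_int :: int \<Rightarrow> 'a::comm_ring_1) (p + q) = map_poly of_int p + map_poly of_int q"
  by (rule poly_eqI) (simp add: coeff_map_poly)

lemma map_poly_of_int_diff:
  "map_poly (of_int :: int \<Rightarrow> 'a::comm_ring_1) (p - q) = map_poly of_int p - map_poly of_int q"
  by (rule poly_eqI) (simp add: coeff_map_poly)

lemma map_poly_of_int_mult:
  "map_poly (of_int :: int \<Rightarrow> 'a::comm_ring_1) (p * q) = map_poly of_int p * map_poly of_int q"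
  by (rule poly_eqI) (simp add: coeff_map_poly coeff_mult)

lemma map_poly_of_int_power:
  "map_poly (of_int :: int \<Rightarrow> 'a::comm_ring_1) (p ^ k) = map_poly of_int p ^ k"
  by (induction k) (simp_all add: map_poly_of_int_mult)

lemma map_poly_of_int_dvd:
  "p dvd q \<Longrightarrow> map_poly (of_int :: int \<Rightarrow> 'a::comm_ring_1) p dvd map_poly of_int q"
  by (elim dvdE) (simp add: map_poly_of_int_mult)

lemma map_poly_of_int_qpoch:
  "map_poly of_int (qpoch n) = (\<Prod>i=1..n. 1 - monom (1::'a::comm_ring_1) i)"
  by (induction n)
     (simp_all add: qpoch_def prod.nat_ivl_Suc' map_poly_of_int_mult map_poly_of_int_diff
                    map_poly_monom)

lemma cis_pi_div_power_eq_1_iff: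
  fixes m i :: nat
  assumes "m > 0"
  shows "cis (pi / m) ^ i = 1 \<longleftrightarrow> 2 * m dvd i"
proof -
  have angle: "real i * (pi / m) = of_int k * (2 * pi) \<longleftrightarrow> int i = int (2 * m) * k"
    for k :: int
  proof -
    have "real i * (pi / m) = of_int k * (2 * pi) \<longleftrightarrow> (real i / m) * pi = (2 * of_int k) * pi"
      by (simp add: mult_ac)
    also have "\<dots> \<longleftrightarrow> real i / m = 2 * of_int k"
      by (simp only: mult_cancel_right pi_neq_zero simp_thms)
    also have "\<dots> \<longleftrightarrow> real_of_int (int i) = real_of_int (int (2 * m) * k)"
      using assms by (simp add: divide_eq_eq mult_ac)
    finally show ?thesis
      by (simp only: of_int_eq_iff)
  qed
  have "cis (pi / m) ^ i = 1 \<longleftrightarrow> (\<exists>k::int. real i * (pi / m) = of_int k * (2 * pi))"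
    by (simp only: DeMoivre cis_eq_1_iff)
  also have "\<dots> \<longleftrightarrow> int (2 * m) dvd int i"
    by (simp only: angle dvd_def)
  finally show ?thesis
    by (simp only: of_nat_dvd_iff)
qed

theorem lemma4p4:
  fixes n m :: nat
  assumes "n \<ge> 1" and "m \<ge> 1"
  shows "(1 + monom 1 m) ^ (n div (2 * m)) dvd qpoch n \<and>
         \<not> (1 + monom 1 m) ^ (n div (2 * m) + 1) dvd qpoch n"
proof
  let ?K = "n div (2 * m)" and ?z = "cis (pi / m)"
  show "(1 + monom 1 m) ^ ?K dvd qpoch n"
    unfolding qpoch_def by (rule power_one_plus_monom_dvd_prod_one_minus_monom)
  show "\<not> (1 + monom 1 m) ^ (?K + 1) dvd qpoch n"
  proof
    assume "(1 + monom 1 m) ^ (?K + 1) dvd qpoch n"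
    from map_poly_of_int_dvd[OF this]
    have "(1 + monom 1 m) ^ (?K + 1) dvd (\<Prod>i=1..n. 1 - monom (1::complex) i)"
      by (simp only: map_poly_of_int_power map_poly_of_int_add map_poly_of_int_qpoch
                     map_poly_monom map_poly_1' of_int_0 of_int_1)
    moreover have "[:-?z, 1:] dvd 1 + monom 1 m"
      unfolding poly_eq_0_iff_dvd[symmetric] using assms(2) by (simp add: poly_monom DeMoivre)
    ultimately have "[:-?z, 1:] ^ (?K + 1) dvd (\<Prod>i=1..n. 1 - monom 1 i)"
      by (meson dvd_power_same dvd_trans)
    then have "?K + 1 \<le> order ?z (\<Prod>i=1..n. 1 - monom 1 i)"
      by (subst (asm) order_divides) (simp add: monom_eq_1_iff)
    also have "\<dots> = ?K"
      using assms(2) by (intro order_prod_one_minus_monom cis_pi_div_power_eq_1_iff) simp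
    finally show False by simp
  qed
qed

end
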